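(* Let $X$ be a cohesive almost zero-dimensional space. Then $X$ is nowhere rim-$\sigma$C: no point of $X$ has a neighborhood basis consisting of sets whose boundaries are $\sigma$C-sets in $X$. In particular $X$ is nowhere rim-$\sigma$-compact (no point has a neighborhood basis of sets with $\sigma$-compact boundaries) and nowhere rational (no point has a neighborhood basis of sets with countable boundaries).
   Context: All spaces are separable and metrizable. A subset $A$ of $X$ is a C-set in $X$ if it is an intersection of clopen subsets of $X$; a $\sigma$C-set is a countable union of C-sets. $X$ is almost zero-dimensional if every point has a neighborhood basis consisting of C-sets in $X$. $X$ is cohesive if every point $x\in X$ has a neighborhood which contains no non-empty clopen subset of $X$. *)

theory Defs
  imports "HOL-Analysis.Analysis"
begin

definition nbhd_basis_with :: "'a topology \<Rightarrow> ('a set \<Rightarrow> bool) \<Rightarrow> 'a \<Rightarrow> bool" where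
  "nbhd_basis_with X P x \<longleftrightarrow>
     (\<forall>U. openin X U \<and> x \<in> U \<longrightarrow> (\<exists>N. N \<subseteq> U \<and> x \<in> X interior_of N \<and> P N))"

definition clopenin :: "'a topology \<Rightarrow> 'a set \<Rightarrow> bool" where
  "clopenin X C \<longleftrightarrow> openin X C \<and> closedin X C"

text \<open>C-set: an intersection of clopen subsets of X (the empty intersection being X itself).\<close>
definition C_set :: "'a topology \<Rightarrow> 'a set \<Rightarrow> bool" where
  "C_set X A \<longleftrightarrow> (\<exists>\<F>. (\<forall>C\<in>\<F>. clopenin X C) \<and> A = topspace X \<inter> \<Inter>\<F>)"

definition sigmaC_set :: "'a topology \<Rightarrow> 'a set \<Rightarrow> bool" where
  "sigmaC_set X A \<longleftrightarrow> (\<exists>\<F>. countable \<F> \<and> (\<forall>B\<in>\<F>. C_set X B) \<and> A = \<Union>\<F>)"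

definition sigma_compactin :: "'a topology \<Rightarrow> 'a set \<Rightarrow> bool" where
  "sigma_compactin X A \<longleftrightarrow> (\<exists>\<F>. countable \<F> \<and> (\<forall>K\<in>\<F>. compactin X K) \<and> A = \<Union>\<F>)"

definition almost_zero_dimensional :: "'a topology \<Rightarrow> bool" where
  "almost_zero_dimensional X \<longleftrightarrow> (\<forall>x\<in>topspace X. nbhd_basis_with X (C_set X) x)"

definition cohesive :: "'a topology \<Rightarrow> bool" where
  "cohesive X \<longleftrightarrow> (\<forall>x\<in>topspace X. \<exists>N. N \<subseteq> topspace X \<and> x \<in> X interior_of N \<and>
       \<not> (\<exists>C. C \<noteq> {} \<and> C \<subseteq> N \<and> clopenin X C))"

definition nowhere_rim_sigmaC :: "'a topology \<Rightarrow> bool" where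
  "nowhere_rim_sigmaC X \<longleftrightarrow>
     (\<forall>x\<in>topspace X. \<not> nbhd_basis_with X (\<lambda>N. sigmaC_set X (X frontier_of N)) x)"

definition nowhere_rim_sigma_compact :: "'a topology \<Rightarrow> bool" where
  "nowhere_rim_sigma_compact X \<longleftrightarrow>
     (\<forall>x\<in>topspace X. \<not> nbhd_basis_with X (\<lambda>N. sigma_compactin X (X frontier_of N)) x)"

definition nowhere_rational :: "'a topology \<Rightarrow> bool" where
  "nowhere_rational X \<longleftrightarrow>
     (\<forall>x\<in>topspace X. \<not> nbhd_basis_with X (\<lambda>N. countable (X frontier_of N)) x)"

end

(*
  Suppose x had a neighbourhood basis of sets with sigma-C frontier. Inside a neighbourhood of x
  containing no non-empty clopen set choose such a W, with frontier A_0 \<union> A_1 \<union> ... (C-sets),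
  and write U = int W as the union of the interiors of C-sets B_0, B_1, ... \<subseteq> U with x \<in> B_0
  (second countability). In a Lindelof space disjoint C-sets are separated by clopen sets, so
  some clopen D_n \<supseteq> A_n misses B_0 \<union> ... \<union> B_n. Then U - (D_0 \<union> D_1 \<union> ...) is clopen: open
  because near a point of int B_m only D_0, ..., D_(m-1) matter, and closed because the limit
  points of U outside U lie in the frontier of W. It contains x, a contradiction.
  In an almost zero-dimensional T1 space compact sets, in particular points, are C-sets, which
  gives the other two statements.
*)
theory Submission
  imports Defs
begin

lemma separable_metrizable_imp_second_countable:
  assumes "separable_space X" and "metrizable_space X"
  shows "second_countable X"
proof -
  obtain M d where "Metric_space M d" and X: "X = Metric_space.mtopology M d"
    using assms(2) metrizable_space_def by blast
  interpret Metric_space M d by fact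
  have "separable_space mtopology"
    using assms(1) X by simp
  then obtain C where "countable C" and dense: "mtopology closure_of C = M"
    unfolding separable_space_def topspace_mtopology by blast
  define \<B> where "\<B> = (\<lambda>(c, n). mball c (1 / real (Suc n))) ` (C \<times> (UNIV :: nat set))"
  have "\<exists>V\<in>\<B>. x \<in> V \<and> V \<subseteq> U" if U: "openin mtopology U" and xU: "x \<in> U" for U x
  proof -
    obtain r where x: "x \<in> M" and r: "r > 0" "mball x r \<subseteq> U"
      using U xU unfolding openin_mtopology by blast
    obtain n :: nat where n: "1 / real (Suc n) < r / 2"
      using r(1) reals_Archimedean[of "r / 2"] by (auto simp: inverse_eq_divide)
    have "x \<in> mtopology closure_of C"
      using x dense by simp
    then have "\<exists>c\<in>C. c \<in> mball x (1 / real (Suc n))"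
      unfolding metric_closure_of by simp
    then obtain c where c: "c \<in> C" "c \<in> mball x (1 / real (Suc n))"
      by blast
    have "x \<in> mball c (1 / real (Suc n))"
      using c x by (simp add: commute)
    moreover have "mball c (1 / real (Suc n)) \<subseteq> mball x r"
      using c n x by (intro mball_subset) (auto simp: commute)
    moreover have "mball c (1 / real (Suc n)) \<in> \<B>"
      using c unfolding \<B>_def by force
    ultimately show ?thesis
      using r by blast
  qed
  then show ?thesis
    unfolding X second_countable_def using \<open>countable C\<close> by (intro exI[of _ \<B>]) (auto simp: \<B>_def)
qed

lemma clopenin_empty [simp]: "clopenin X {}"
  by (simp add: clopenin_def)

lemma clopenin_diff: "clopenin X S \<Longrightarrow> clopenin X T \<Longrightarrow> clopenin X (S - T)"
  by (simp add: clopenin_def openin_diff closedin_diff)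

lemma clopenin_Union:
  "finite \<C> \<Longrightarrow> (\<And>C. C \<in> \<C> \<Longrightarrow> clopenin X C) \<Longrightarrow> clopenin X (\<Union>\<C>)"
  by (auto simp: clopenin_def intro: closedin_Union)

lemma C_set_iff:
  "C_set X A \<longleftrightarrow>
     A \<subseteq> topspace X \<and> (\<forall>z \<in> topspace X - A. \<exists>C. clopenin X C \<and> A \<subseteq> C \<and> z \<notin> C)"
    (is "_ \<longleftrightarrow> _ \<and> ?separated")
proof
  assume "C_set X A"
  then obtain \<F> where \<F>: "\<And>C. C \<in> \<F> \<Longrightarrow> clopenin X C" and A: "A = topspace X \<inter> \<Inter>\<F>"
    unfolding C_set_def by blast
  show "A \<subseteq> topspace X \<and> ?separated"
  proof
    show "A \<subseteq> topspace X"
      using A by blast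
    show ?separated
    proof
      fix z assume "z \<in> topspace X - A"
      then obtain C where "C \<in> \<F>" "z \<notin> C"
        using A by blast
      then show "\<exists>C. clopenin X C \<and> A \<subseteq> C \<and> z \<notin> C"
        using \<F> A by blast
    qed
  qed
next
  assume "A \<subseteq> topspace X \<and> ?separated"
  then have "A = topspace X \<inter> \<Inter>{C. clopenin X C \<and> A \<subseteq> C}"
    by blast
  then show "C_set X A"
    unfolding C_set_def by (metis (mono_tags, lifting) mem_Collect_eq)
qed

lemma C_set_clopen_superset_excluding:
  assumes "C_set X A" and "z \<in> topspace X - A"
  obtains C where "clopenin X C" "A \<subseteq> C" "z \<notin> C"
  using assms unfolding C_set_iff by blast

lemma C_set_imp_clopen_nbhd_disjoint:
  assumes "C_set X A" and "z \<in> topspace X - A"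
  obtains C where "clopenin X C" "z \<in> C" "C \<inter> A = {}"
proof -
  obtain C where C: "clopenin X C" "A \<subseteq> C" "z \<notin> C"
    using C_set_clopen_superset_excluding[OF assms] .
  have "clopenin X (topspace X - C)"
    using C(1) clopenin_diff[of X "topspace X" C] by (simp add: clopenin_def)
  then show thesis
    using that C assms(2) by blast
qed

lemma C_set_Union:
  assumes "finite \<F>" and C: "\<And>A. A \<in> \<F> \<Longrightarrow> C_set X A"
  shows "C_set X (\<Union>\<F>)"
  unfolding C_set_iff
proof (intro conjI ballI)
  show "\<Union>\<F> \<subseteq> topspace X"
    using C unfolding C_set_iff by blast
  fix z assume z: "z \<in> topspace X - \<Union>\<F>"
  have "\<forall>A\<in>\<F>. \<exists>C. clopenin X C \<and> A \<subseteq> C \<and> z \<notin> C"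
    using C z unfolding C_set_iff by blast
  then obtain f where f: "\<And>A. A \<in> \<F> \<Longrightarrow> clopenin X (f A) \<and> A \<subseteq> f A \<and> z \<notin> f A"
    by metis
  have "clopenin X (\<Union>(f ` \<F>))"
    using assms(1) f by (intro clopenin_Union) auto
  then show "\<exists>C. clopenin X C \<and> \<Union>\<F> \<subseteq> C \<and> z \<notin> C"
    using f by blast
qed

lemma sigmaC_set_as_sequence:
  assumes "sigmaC_set X S"
  obtains A :: "nat \<Rightarrow> 'a set" where "\<And>n. C_set X (A n)" "S = (\<Union>n. A n)"
proof -
  obtain \<F> where "countable \<F>" and \<F>: "\<And>B. B \<in> \<F> \<Longrightarrow> C_set X B" and S: "S = \<Union>\<F>"
    using assms unfolding sigmaC_set_def by blast
  define A where "A = from_nat_into (insert {} \<F>)"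
  have range_A: "range A = insert {} \<F>"
    unfolding A_def by (simp add: \<open>countable \<F>\<close>)
  have "C_set X {}"
    using C_set_Union[of "{}"] by simp
  then have "C_set X (A n)" for n
    using \<F> range_A by (metis insert_iff rangeI)
  moreover have "S = (\<Union>n. A n)"
    using S range_A by simp
  ultimately show thesis
    by (rule that)
qed

lemma almost_zero_dimensional_clopen_separation:
  assumes "almost_zero_dimensional X" and "t1_space X"
    and "x \<in> topspace X" and "y \<in> topspace X" and "x \<noteq> y"
  obtains C where "clopenin X C" "x \<in> C" "y \<notin> C"
proof -
  have "openin X (topspace X - {y})"
    using closedin_t1_singleton[OF assms(2,4)] by (simp add: closedin_def)
  moreover have "x \<in> topspace X - {y}"
    using assms(3,5) by blast
  moreover have "nbhd_basis_with X (C_set X) x"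
    using assms(1,3) unfolding almost_zero_dimensional_def by blast
  ultimately obtain N where N: "N \<subseteq> topspace X - {y}" "x \<in> X interior_of N" "C_set X N"
    unfolding nbhd_basis_with_def by blast
  have "y \<in> topspace X - N"
    using N(1) assms(4) by blast
  then obtain C where C: "clopenin X C" "N \<subseteq> C" "y \<notin> C"
    using C_set_clopen_superset_excluding[OF N(3)] by blast
  have "x \<in> C"
    using N(2) C(2) interior_of_subset[of X N] by blast
  then show thesis
    by (rule that[OF C(1) _ C(3)])
qed

lemma almost_zero_dimensional_compactin_imp_C_set:
  assumes azd: "almost_zero_dimensional X" and t1: "t1_space X" and K: "compactin X K"
  shows "C_set X K"
  unfolding C_set_iff
proof (intro conjI ballI)
  show K_sub: "K \<subseteq> topspace X"
    using K by (rule compactin_subset_topspace)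
  fix y assume y: "y \<in> topspace X - K"
  let ?\<U> = "{C. clopenin X C \<and> y \<notin> C}"
  have "K \<subseteq> \<Union>?\<U>"
  proof
    fix k assume "k \<in> K"
    then obtain C where "clopenin X C" "k \<in> C" "y \<notin> C"
      using almost_zero_dimensional_clopen_separation[OF azd t1, of k y] K_sub y by blast
    then show "k \<in> \<Union>?\<U>"
      by blast
  qed
  moreover have "\<forall>U\<in>?\<U>. openin X U"
    by (simp add: clopenin_def)
  ultimately obtain \<G> where \<G>: "finite \<G>" "\<G> \<subseteq> ?\<U>" "K \<subseteq> \<Union>\<G>"
    using K unfolding compactin_def by meson
  have "clopenin X (\<Union>\<G>)"
    using \<G>(1,2) by (intro clopenin_Union) auto
  then show "\<exists>C. clopenin X C \<and> K \<subseteq> C \<and> y \<notin> C"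
    using \<G>(2,3) by blast
qed

lemma Lindelof_clopen_cover_disjoint_refinement:
  assumes "Lindelof_space X" and "\<U> \<noteq> {}"
    and clopen: "\<And>U. U \<in> \<U> \<Longrightarrow> clopenin X U" and cover: "topspace X \<subseteq> \<Union>\<U>"
  obtains G :: "nat \<Rightarrow> 'a set"
  where "disjoint_family G" "(\<Union>n. G n) = topspace X"
    "\<And>n. clopenin X (G n)" "\<And>n. \<exists>U\<in>\<U>. G n \<subseteq> U"
proof -
  obtain \<V> where \<V>: "countable \<V>" "\<V> \<subseteq> \<U>" "topspace X \<subseteq> \<Union>\<V>"
    using assms(1) clopen cover unfolding Lindelof_space_alt clopenin_def by meson
  obtain U\<^sub>0 where "U\<^sub>0 \<in> \<U>"
    using assms(2) by blast
  define c where "c = from_nat_into (insert U\<^sub>0 \<V>)"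
  have range_c: "range c = insert U\<^sub>0 \<V>"
    unfolding c_def using \<V>(1) by simp
  then have "range c \<subseteq> \<U>"
    using \<open>U\<^sub>0 \<in> \<U>\<close> \<V>(2) by simp
  then have c_in: "c n \<in> \<U>" for n
    by auto
  have "\<And>U. U \<in> \<U> \<Longrightarrow> U \<subseteq> topspace X"
    using clopen by (simp add: clopenin_def openin_subset)
  then have "U\<^sub>0 \<union> \<Union>\<V> = topspace X"
    using \<open>U\<^sub>0 \<in> \<U>\<close> \<V>(2,3) by blast
  then have UN_c: "(\<Union>n. c n) = topspace X"
    using range_c by simp
  show thesis
  proof (rule that[of "disjointed c"])
    show "disjoint_family (disjointed c)"
      by (rule disjoint_family_disjointed)
    show "(\<Union>n. disjointed c n) = topspace X"
      using UN_c by (simp add: UN_disjointed_eq)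
    show "clopenin X (disjointed c n)" for n
      unfolding disjointed_def using c_in clopen by (intro clopenin_diff clopenin_Union) auto
    show "\<exists>U\<in>\<U>. disjointed c n \<subseteq> U" for n
      using c_in[of n] disjointed_subset[of c n] by blast
  qed
qed

lemma clopenin_UN_open_partition:
  assumes disj: "disjoint_family G" and cover: "(\<Union>i. G i) = topspace X"
    and "open": "\<And>i. openin X (G i)"
  shows "clopenin X (\<Union>i\<in>I. G i)"
proof -
  have "topspace X - (\<Union>i\<in>I. G i) = (\<Union>i\<in>-I. G i)"
  proof (intro equalityI subsetI)
    fix z assume "z \<in> topspace X - (\<Union>i\<in>I. G i)"
    then show "z \<in> (\<Union>i\<in>-I. G i)"
      using cover by blast
  next
    fix z assume "z \<in> (\<Union>i\<in>-I. G i)"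
    then obtain j where j: "j \<notin> I" "z \<in> G j"
      by blast
    have "z \<notin> G i" if "i \<in> I" for i
      using disjoint_family_onD[OF disj, of i j] that j by blast
    then show "z \<in> topspace X - (\<Union>i\<in>I. G i)"
      using cover j(2) by blast
  qed
  moreover have "openin X (\<Union>i\<in>J. G i)" for J
    using "open" by (auto intro: openin_Union)
  ultimately show ?thesis
    unfolding clopenin_def closedin_def using openin_subset by metis
qed

lemma Lindelof_clopen_separation_of_C_sets:
  assumes "Lindelof_space X" and A: "C_set X A" and K: "C_set X K" and "A \<inter> K = {}"
  obtains D where "clopenin X D" "A \<subseteq> D" "D \<inter> K = {}"
proof -
  define \<U> where "\<U> = {C. clopenin X C \<and> (C \<inter> A = {} \<or> C \<inter> K = {})}"
  have cover: "topspace X \<subseteq> \<Union>\<U>"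
  proof
    fix z assume z: "z \<in> topspace X"
    then have "z \<in> topspace X - A \<or> z \<in> topspace X - K"
      using \<open>A \<inter> K = {}\<close> by blast
    then obtain C where "clopenin X C" "z \<in> C" "C \<inter> A = {} \<or> C \<inter> K = {}"
      using C_set_imp_clopen_nbhd_disjoint[OF A] C_set_imp_clopen_nbhd_disjoint[OF K] by metis
    then show "z \<in> \<Union>\<U>"
      unfolding \<U>_def by blast
  qed
  moreover have "\<U> \<noteq> {}"
    using clopenin_empty unfolding \<U>_def by blast
  moreover have "\<And>U. U \<in> \<U> \<Longrightarrow> clopenin X U"
    unfolding \<U>_def by blast
  ultimately obtain G :: "nat \<Rightarrow> 'a set" where G: "disjoint_family G" "(\<Union>n. G n) = topspace X"
    "\<And>n. clopenin X (G n)" "\<And>n. \<exists>U\<in>\<U>. G n \<subseteq> U"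
    using Lindelof_clopen_cover_disjoint_refinement[OF assms(1)] by metis
  define D where "D = (\<Union>n \<in> {n. G n \<inter> K = {}}. G n)"
  have "clopenin X D"
    unfolding D_def using G(1,2,3) by (intro clopenin_UN_open_partition) (auto simp: clopenin_def)
  moreover have "A \<subseteq> D"
  proof
    fix z assume z: "z \<in> A"
    then have "z \<in> topspace X"
      using A unfolding C_set_iff by blast
    then obtain n where n: "z \<in> G n"
      using G(2) by blast
    obtain U where "U \<in> \<U>" "G n \<subseteq> U"
      using G(4) by blast
    then have "G n \<inter> K = {}"
      using z n unfolding \<U>_def by blast
    then show "z \<in> D"
      using n unfolding D_def by blast
  qed
  moreover have "D \<inter> K = {}"
    unfolding D_def by blast
  ultimately show thesis
    by (rule that)
qed

lemma openin_diff_Union_closedin: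
  fixes B D :: "nat \<Rightarrow> 'a set"
  assumes "openin X U" and U_cover: "U \<subseteq> (\<Union>m. X interior_of B m)"
    and closed: "\<And>n. closedin X (D n)" and disj: "\<And>m n. m \<le> n \<Longrightarrow> B m \<inter> D n = {}"
  shows "openin X (U - (\<Union>n. D n))"
proof (subst openin_subopen, intro ballI)
  fix q assume q: "q \<in> U - (\<Union>n. D n)"
  then obtain m where m: "q \<in> X interior_of B m"
    using U_cover by blast
  \<comment> \<open>Near a point of the interior of B m only the finitely many D n with n < m matter.\<close>
  define T where "T = (U \<inter> X interior_of B m) - (\<Union>n<m. D n)"
  have "openin X T"
    unfolding T_def using assms(1) closed by (intro openin_diff openin_Int closedin_Union) auto
  moreover have "T \<subseteq> U - (\<Union>n. D n)"
  proof
    fix w assume w: "w \<in> T"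
    have "w \<notin> D n" for n
    proof (cases "n < m")
      case True
      then show ?thesis
        using w unfolding T_def by blast
    next
      case False
      then have "B m \<inter> D n = {}"
        using disj by simp
      moreover have "w \<in> B m"
        using w interior_of_subset[of X "B m"] unfolding T_def by blast
      ultimately show ?thesis
        by blast
    qed
    then show "w \<in> U - (\<Union>n. D n)"
      using w unfolding T_def by blast
  qed
  moreover have "q \<in> T"
    using q m unfolding T_def by blast
  ultimately show "\<exists>T. openin X T \<and> q \<in> T \<and> T \<subseteq> U - (\<Union>n. D n)"
    by blast
qed

lemma closedin_diff_openin:
  assumes "U \<subseteq> topspace X" and "openin X V" and "X closure_of U - U \<subseteq> V"
  shows "closedin X (U - V)"
proof -
  have "V \<inter> X closure_of (U - V) = {}"
    using openin_Int_closure_of_subset[OF assms(2), of "U - V"] by (simp add: Int_Diff)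
  moreover have "X closure_of (U - V) \<subseteq> X closure_of U"
    by (rule closure_of_mono) blast
  ultimately have "X closure_of (U - V) \<subseteq> U - V"
    using assms(3) by blast
  then show ?thesis
    using assms(1) closure_of_subset_eq by blast
qed

lemma clopenin_diff_Union_clopen:
  fixes B D :: "nat \<Rightarrow> 'a set"
  assumes "openin X U" and "U \<subseteq> (\<Union>m. X interior_of B m)"
    and D: "\<And>n. clopenin X (D n)" and "\<And>m n. m \<le> n \<Longrightarrow> B m \<inter> D n = {}"
    and "X closure_of U - U \<subseteq> (\<Union>n. D n)"
  shows "clopenin X (U - (\<Union>n. D n))"
  unfolding clopenin_def
proof
  show "openin X (U - (\<Union>n. D n))"
    using assms(1,2,4) D by (intro openin_diff_Union_closedin) (auto simp: clopenin_def)
  show "closedin X (U - (\<Union>n. D n))"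
    using assms(1,5) D by (intro closedin_diff_openin openin_subset) (auto simp: clopenin_def)
qed

lemma almost_zero_dimensional_C_set_cover:
  assumes "second_countable X" and azd: "almost_zero_dimensional X"
    and U: "openin X U" and "x \<in> U"
  obtains B :: "nat \<Rightarrow> 'a set"
  where "\<And>n. C_set X (B n)" "\<And>n. B n \<subseteq> U" "x \<in> B 0" "U \<subseteq> (\<Union>n. X interior_of B n)"
proof -
  define \<L> where "\<L> = {L. C_set X L \<and> L \<subseteq> U}"
  have U_sub: "U \<subseteq> topspace X"
    using U by (rule openin_subset)
  have nbhd: "\<exists>L\<in>\<L>. y \<in> X interior_of L" if "y \<in> U" for y
  proof -
    have "nbhd_basis_with X (C_set X) y"
      using azd that U_sub unfolding almost_zero_dimensional_def by blast
    then show ?thesis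
      using U that unfolding nbhd_basis_with_def \<L>_def by blast
  qed
  have "Lindelof_space (subtopology X U)"
    using assms(1) by (intro second_countable_imp_Lindelof_space second_countable_subtopology)
  moreover have "U \<subseteq> \<Union>((\<lambda>L. X interior_of L) ` \<L>)"
    using nbhd by blast
  ultimately obtain \<V> where "countable \<V>" "\<V> \<subseteq> (\<lambda>L. X interior_of L) ` \<L>" "U \<subseteq> \<Union>\<V>"
    unfolding Lindelof_space_subtopology_subset[OF U_sub] by (metis imageE openin_interior_of)
  then obtain \<B> where \<B>: "countable \<B>" "\<B> \<subseteq> \<L>" "U \<subseteq> (\<Union>L\<in>\<B>. X interior_of L)"
    using countable_subset_image[of \<V> "\<lambda>L. X interior_of L" \<L>] by blast
  then have "\<B> \<noteq> {}"
    using \<open>x \<in> U\<close> by blast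
  obtain L\<^sub>0 where "L\<^sub>0 \<in> \<L>" "x \<in> X interior_of L\<^sub>0"
    using nbhd \<open>x \<in> U\<close> by blast
  define B where "B = case_nat L\<^sub>0 (from_nat_into \<B>)"
  have "B n \<in> \<L>" for n
    using \<open>L\<^sub>0 \<in> \<L>\<close> \<B>(2) from_nat_into[OF \<open>\<B> \<noteq> {}\<close>] unfolding B_def
    by (cases n) auto
  moreover have "x \<in> B 0"
    unfolding B_def using \<open>x \<in> X interior_of L\<^sub>0\<close> interior_of_subset[of X L\<^sub>0] by auto
  moreover have "U \<subseteq> (\<Union>n. X interior_of B n)"
  proof
    fix y assume "y \<in> U"
    then obtain L where "L \<in> \<B>" "y \<in> X interior_of L"
      using \<B>(3) by blast
    moreover obtain k where "from_nat_into \<B> k = L"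
      using from_nat_into_surj[OF \<B>(1) \<open>L \<in> \<B>\<close>] by blast
    ultimately show "y \<in> (\<Union>n. X interior_of B n)"
      unfolding B_def by (metis UN_I iso_tuple_UNIV_I nat.case(2))
  qed
  ultimately show thesis
    using that unfolding \<L>_def by blast
qed

lemma almost_zero_dimensional_sigmaC_frontier_clopen:
  assumes SC: "second_countable X" and azd: "almost_zero_dimensional X"
    and frontier: "sigmaC_set X (X frontier_of W)" and x: "x \<in> X interior_of W"
  obtains Q where "clopenin X Q" "x \<in> Q" "Q \<subseteq> X interior_of W"
proof -
  define U where "U = X interior_of W"
  have U: "openin X U"
    unfolding U_def by simp
  obtain A :: "nat \<Rightarrow> 'a set" where A: "\<And>n. C_set X (A n)" "X frontier_of W = (\<Union>n. A n)"
    using sigmaC_set_as_sequence[OF frontier] by blast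
  obtain B :: "nat \<Rightarrow> 'a set" where B: "\<And>n. C_set X (B n)" "\<And>n. B n \<subseteq> U" "x \<in> B 0"
      "U \<subseteq> (\<Union>n. X interior_of B n)"
    using almost_zero_dimensional_C_set_cover[OF SC azd U(1)] x unfolding U_def by blast
  define K where "K n = (\<Union>m\<le>n. B m)" for n
  have "C_set X (K n)" for n
    unfolding K_def using B(1) by (intro C_set_Union) auto
  moreover have "A n \<inter> K n = {}" for n
    using A(2) B(2) unfolding K_def U_def frontier_of_def by blast
  ultimately have "\<forall>n. \<exists>D. clopenin X D \<and> A n \<subseteq> D \<and> D \<inter> K n = {}"
    using Lindelof_clopen_separation_of_C_sets[OF second_countable_imp_Lindelof_space[OF SC]] A(1)
    by metis
  then obtain D where D: "\<And>n. clopenin X (D n)" "\<And>n. A n \<subseteq> D n" "\<And>n. D n \<inter> K n = {}"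
    by metis
  define Q where "Q = U - (\<Union>n. D n)"
  have "clopenin X Q"
    unfolding Q_def
  proof (rule clopenin_diff_Union_clopen[OF U(1) B(4) D(1)])
    show "B m \<inter> D n = {}" if "m \<le> n" for m n
      using D(3)[of n] that unfolding K_def by blast
    have "X closure_of U \<subseteq> X closure_of W"
      unfolding U_def by (intro closure_of_mono interior_of_subset)
    then show "X closure_of U - U \<subseteq> (\<Union>n. D n)"
      using A(2) D(2) unfolding U_def frontier_of_def by blast
  qed
  moreover have "x \<in> Q"
    using B(3) D(3) x unfolding Q_def K_def U_def by blast
  ultimately show thesis
    using that unfolding Q_def U_def by blast
qed

lemma cohesive_almost_zero_dimensional_imp_nowhere_rim_sigmaC:
  assumes "second_countable X" and "almost_zero_dimensional X" and "cohesive X"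
  shows "nowhere_rim_sigmaC X"
  unfolding nowhere_rim_sigmaC_def
proof (intro ballI notI)
  fix x assume "x \<in> topspace X"
  then obtain N where N: "x \<in> X interior_of N" "\<not> (\<exists>C. C \<noteq> {} \<and> C \<subseteq> N \<and> clopenin X C)"
    using assms(3) unfolding cohesive_def by blast
  assume "nbhd_basis_with X (\<lambda>N. sigmaC_set X (X frontier_of N)) x"
  then obtain W where W: "W \<subseteq> X interior_of N" "x \<in> X interior_of W" "sigmaC_set X (X frontier_of W)"
    using N(1) unfolding nbhd_basis_with_def by (meson openin_interior_of)
  then obtain Q where "clopenin X Q" "x \<in> Q" "Q \<subseteq> X interior_of W"
    using almost_zero_dimensional_sigmaC_frontier_clopen[OF assms(1,2)] by blast
  moreover have "X interior_of W \<subseteq> N"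
    using W(1) interior_of_subset[of X W] interior_of_subset[of X N] by blast
  ultimately show False
    using N(2) by blast
qed

lemma nbhd_basis_with_mono:
  "nbhd_basis_with X P x \<Longrightarrow> (\<And>N. P N \<Longrightarrow> Q N) \<Longrightarrow> nbhd_basis_with X Q x"
  unfolding nbhd_basis_with_def by metis

lemma almost_zero_dimensional_sigma_compactin_imp_sigmaC_set:
  assumes "almost_zero_dimensional X" and "t1_space X" and "sigma_compactin X S"
  shows "sigmaC_set X S"
  using assms almost_zero_dimensional_compactin_imp_C_set
  unfolding sigma_compactin_def sigmaC_set_def by metis

lemma countable_imp_sigma_compactin:
  assumes "countable S" and "S \<subseteq> topspace X"
  shows "sigma_compactin X S"
  unfolding sigma_compactin_def
proof (intro exI conjI)
  show "countable ((\<lambda>y. {y}) ` S)"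
    using assms(1) by simp
  show "\<forall>K \<in> (\<lambda>y. {y}) ` S. compactin X K"
    using assms(2) by auto
qed auto

lemma nowhere_rim_sigmaC_imp_nowhere_rim_sigma_compact:
  assumes "almost_zero_dimensional X" and "t1_space X" and "nowhere_rim_sigmaC X"
  shows "nowhere_rim_sigma_compact X"
  unfolding nowhere_rim_sigma_compact_def
proof (intro ballI notI)
  fix x assume x: "x \<in> topspace X"
  assume "nbhd_basis_with X (\<lambda>N. sigma_compactin X (X frontier_of N)) x"
  then have "nbhd_basis_with X (\<lambda>N. sigmaC_set X (X frontier_of N)) x"
    by (rule nbhd_basis_with_mono)
      (rule almost_zero_dimensional_sigma_compactin_imp_sigmaC_set[OF assms(1,2)])
  then show False
    using assms(3) x unfolding nowhere_rim_sigmaC_def by blast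
qed

lemma nowhere_rim_sigma_compact_imp_nowhere_rational:
  assumes "nowhere_rim_sigma_compact X"
  shows "nowhere_rational X"
  unfolding nowhere_rational_def
proof (intro ballI notI)
  fix x assume x: "x \<in> topspace X"
  assume "nbhd_basis_with X (\<lambda>N. countable (X frontier_of N)) x"
  then have "nbhd_basis_with X (\<lambda>N. sigma_compactin X (X frontier_of N)) x"
    by (rule nbhd_basis_with_mono)
      (rule countable_imp_sigma_compactin[OF _ frontier_of_subset_topspace])
  then show False
    using assms x unfolding nowhere_rim_sigma_compact_def by blast
qed

theorem corollary4p7:
  fixes X :: "'a topology"
  assumes "separable_space X" and "metrizable_space X"
    and "cohesive X" and "almost_zero_dimensional X"
  shows "nowhere_rim_sigmaC X \<and> nowhere_rim_sigma_compact X \<and> nowhere_rational X"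
proof -
  have "second_countable X"
    using assms(1,2) by (rule separable_metrizable_imp_second_countable)
  then have rim_sigmaC: "nowhere_rim_sigmaC X"
    using assms(3,4) by (intro cohesive_almost_zero_dimensional_imp_nowhere_rim_sigmaC)
  moreover have "nowhere_rim_sigma_compact X"
    using assms(4) metrizable_imp_t1_space[OF assms(2)] rim_sigmaC
    by (rule nowhere_rim_sigmaC_imp_nowhere_rim_sigma_compact)
  moreover have "nowhere_rational X"
    using \<open>nowhere_rim_sigma_compact X\<close> by (rule nowhere_rim_sigma_compact_imp_nowhere_rational)
  ultimately show ?thesis
    by blast
qed

end
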